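(* For all constants $\beta < \frac{1}{16}$, $L > 16\beta$ and $C_1 > 1$ there exists a constant $C_2 > 1$ such that the following holds. Let $\delta\in(0,1)$, suppose $n > C_2\log\frac{1}{\delta}$, and let $T = \sigma\sqrt{\frac{n}{2\log\frac{2}{\delta}}}$. Let $x_1,\dots,x_n$ be i.i.d. real samples from a distribution with mean $\mu$ and variance at most $\sigma^2$, and let $\mu_0\in\mathbb{R}$ be a given estimate with $|\mu_0 - \mu|\le C_1\sigma\sqrt{\frac{\log\frac{1}{\delta}}{n}}$. Consider the test that computes \[ B = \frac{1}{n}\sum_{i=1}^n (x_i - \mu_0)^2\mathbb{1}_{|x_i - \mu_0| \le 2\beta T} \] and returns ``INLIER-LIGHT'' if $B \le (1-2L)\sigma^2$ and ``OUTLIER-LIGHT'' otherwise. Then with probability at least $1-\delta$: if the test returns ``INLIER-LIGHT'', the distribution is $(\beta, L)$-inlier-light; and if it returns ``OUTLIER-LIGHT'', the distribution is $(4\beta, 4L)$-outlier-light.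
   Context: For a real-valued distribution $x$ with mean $\mu$ and variance at most $\sigma^2$, and with $T = \sigma\sqrt{\frac{n}{2\log\frac{2}{\delta}}}$: $x$ is $(\beta, L)$-inlier-light if $\mathbb{E}[(x-\mu)^2\mathbb{1}_{|x-\mu|\le\beta T}] < (1-L)\sigma^2$, and $x$ is $(\beta,L)$-outlier-light if $\mathbb{E}[(x-\mu)^2\mathbb{1}_{|x-\mu|\ge\beta T}] < L\sigma^2$. *)

theory Defs
  imports "HOL-Probability.Probability"
begin

definition T_param :: "real \<Rightarrow> nat \<Rightarrow> real \<Rightarrow> real" where
  "T_param \<sigma> n \<delta> = \<sigma> * sqrt (real n / (2 * ln (2 / \<delta>)))"

definition inlier_light :: "real measure \<Rightarrow> real \<Rightarrow> real \<Rightarrow> real \<Rightarrow> real \<Rightarrow> real \<Rightarrow> bool" where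
  "inlier_light M \<mu> \<sigma> T \<beta> L \<longleftrightarrow>
     (\<integral>x. (x - \<mu>)^2 * indicator {x. \<bar>x - \<mu>\<bar> \<le> \<beta> * T} x \<partial>M) < (1 - L) * \<sigma>^2"

definition outlier_light :: "real measure \<Rightarrow> real \<Rightarrow> real \<Rightarrow> real \<Rightarrow> real \<Rightarrow> real \<Rightarrow> bool" where
  "outlier_light M \<mu> \<sigma> T \<beta> L \<longleftrightarrow>
     (\<integral>x. (x - \<mu>)^2 * indicator {x. \<bar>x - \<mu>\<bar> \<ge> \<beta> * T} x \<partial>M) < L * \<sigma>^2"

definition test_stat :: "nat \<Rightarrow> real \<Rightarrow> real \<Rightarrow> (nat \<Rightarrow> real) \<Rightarrow> real" where
  "test_stat n \<mu>0 thr xs =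
     (1 / real n) * (\<Sum>i<n. (xs i - \<mu>0)^2 * indicator {x. \<bar>x - \<mu>0\<bar> \<le> thr} (xs i))"

end

theory Submission
  imports Defs
begin

(* Let Y = (x - \<mu>0)\<^sup>2 1{|x - \<mu>0| \<le> 2\<beta>T}, so that B is the empirical mean of n i.i.d.
   copies of Y and 0 \<le> Y \<le> (2\<beta>T)\<^sup>2. The sample size forces |\<mu>0 - \<mu>| \<le> \<beta>T and
   (\<mu>0 - \<mu>)\<^sup>2 \<le> \<beta>\<^sup>2\<sigma>\<^sup>2/4, so comparing (x - \<mu>0)\<^sup>2 with (x - \<mu>)\<^sup>2 by Young's inequality
   sandwiches E Y between truncated second moments about \<mu>: if the distribution is not
   (4\<beta>,4L)-outlier-light then E Y \<le> (1 - 7L/2)\<sigma>\<^sup>2, and if it is not (\<beta>,L)-inlier-light then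
   E Y \<ge> (1 - 3L/2)\<sigma>\<^sup>2. The windows |x - \<mu>| \<le> \<beta>T and |x - \<mu>| \<ge> 4\<beta>T are disjoint, so at most
   one of the two failures occurs, and in each the threshold (1 - 2L)\<sigma>\<^sup>2 is a margin of order L\<sigma>\<^sup>2
   away from E Y. The Bernstein-type bound E exp(tY) \<le> exp(t(1 + tb) E Y) for 0 \<le> Y \<le> b, tb \<le> 1,
   used with t = L/(16(2\<beta>T)\<^sup>2), bounds the probability that B falls on the wrong side by
   exp(-L\<^sup>2 log(2/\<delta>)/(128\<beta>\<^sup>2)) \<le> \<delta>, since L > 16\<beta>. *)

lemma exp_le_one_plus_x_plus_sq:
  fixes x :: real
  assumes "x \<le> 1"
  shows "exp x \<le> 1 + x + x\<^sup>2"
proof (cases "0 \<le> x")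
  case True
  then show ?thesis using exp_bound assms by blast
next
  case False
  obtain t where "exp x = (\<Sum>m<3. x ^ m / fact m) + exp t / fact 3 * x ^ 3"
    using Maclaurin_exp_le by blast
  moreover have "exp t / fact 3 * x ^ 3 \<le> 0"
    using False by (intro mult_nonneg_nonpos) auto
  ultimately have "exp x \<le> 1 + x + x\<^sup>2 / 2"
    by (simp add: numeral_3_eq_3 power2_eq_square)
  then show ?thesis using zero_le_power2[of x] by linarith
qed

lemma emeasure_PiM_sum_ge_Chernoff:
  fixes g :: "'a \<Rightarrow> real"
  assumes M: "prob_space M" and g[measurable]: "g \<in> borel_measurable M"
  shows "emeasure (PiM {..<n} (\<lambda>_. M)) {xs \<in> space (PiM {..<n} (\<lambda>_. M)). c \<le> (\<Sum>i<n. g (xs i))}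
     \<le> ennreal (exp (- c)) * (\<integral>\<^sup>+x. ennreal (exp (g x)) \<partial>M) ^ n"
proof -
  interpret product_prob_space "\<lambda>_. M"
    using M by (simp add: product_prob_space_def product_prob_space_axioms_def
        product_sigma_finite_def prob_space_imp_sigma_finite)
  let ?P = "PiM {..<n} (\<lambda>_. M)"
  have "emeasure ?P {xs \<in> space ?P. c \<le> (\<Sum>i<n. g (xs i))}
      \<le> ennreal (exp (- 1 * c)) *
        (\<integral>\<^sup>+xs. ennreal (exp (1 * (\<Sum>i<n. g (xs i)))) * indicator (space ?P) xs \<partial>?P)"
    by (intro Chernoff_ineq_nn_integral_ge) auto
  also have "(\<integral>\<^sup>+xs. ennreal (exp (1 * (\<Sum>i<n. g (xs i)))) * indicator (space ?P) xs \<partial>?P)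
      = (\<integral>\<^sup>+xs. (\<Prod>i<n. ennreal (exp (g (xs i)))) \<partial>?P)"
    by (intro nn_integral_cong) (simp add: exp_sum prod_ennreal)
  also have "\<dots> = (\<integral>\<^sup>+x. ennreal (exp (g x)) \<partial>M) ^ n"
    using product_nn_integral_prod[where f = "\<lambda>_ x. ennreal (exp (g x))" and I = "{..<n}"]
    by simp
  finally show ?thesis by simp
qed

context prob_space
begin

lemma nn_integral_exp_le_bounded_nonneg:
  assumes Y[measurable]: "Y \<in> borel_measurable M"
    and Y_bounds: "\<And>x. x \<in> space M \<Longrightarrow> 0 \<le> Y x \<and> Y x \<le> b" and "t * b \<le> 1"
  shows "(\<integral>\<^sup>+x. ennreal (exp (t * Y x)) \<partial>M) \<le> ennreal (exp (t * (1 + t * b) * expectation Y))"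
proof -
  have int_Y: "integrable M Y"
    by (rule integrable_const_bound[where B = b]) (use Y_bounds in \<open>auto intro!: AE_I2\<close>)
  have exp_le: "exp (t * Y x) \<le> 1 + t * (1 + t * b) * Y x" if "x \<in> space M" for x
  proof -
    have Y_x: "0 \<le> Y x" "Y x \<le> b" using Y_bounds that by auto
    have "t * Y x \<le> 1"
    proof (cases "t \<le> 0")
      case True
      then show ?thesis using Y_x by (simp add: mult_nonpos_nonneg order_trans[of _ 0])
    next
      case False
      then have "t * Y x \<le> t * b" using Y_x by (intro mult_left_mono) auto
      then show ?thesis using \<open>t * b \<le> 1\<close> by linarith
    qed
    then have "exp (t * Y x) \<le> 1 + t * Y x + t\<^sup>2 * (Y x * Y x)"
      using exp_le_one_plus_x_plus_sq[of "t * Y x"] by (simp add: power2_eq_square mult_ac)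
    also have "t\<^sup>2 * (Y x * Y x) \<le> t\<^sup>2 * (b * Y x)"
      using Y_x by (intro mult_left_mono mult_right_mono) auto
    finally show ?thesis by (simp add: algebra_simps power2_eq_square)
  qed
  have "(\<integral>\<^sup>+x. ennreal (exp (t * Y x)) \<partial>M) \<le> (\<integral>\<^sup>+x. ennreal (1 + t * (1 + t * b) * Y x) \<partial>M)"
    using exp_le by (intro nn_integral_mono ennreal_leI) auto
  also have "\<dots> = ennreal (1 + t * (1 + t * b) * expectation Y)"
    using int_Y exp_le by (subst nn_integral_eq_integral)
      (auto intro!: AE_I2 order_trans[OF exp_ge_zero] simp: prob_space)
  also have "\<dots> \<le> ennreal (exp (t * (1 + t * b) * expectation Y))"
    by (intro ennreal_leI) (metis add.commute exp_ge_add_one_self)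
  finally show ?thesis .
qed

lemma measure_PiM_sum_tail:
  assumes Y[measurable]: "Y \<in> borel_measurable M"
    and "\<And>x. x \<in> space M \<Longrightarrow> 0 \<le> Y x \<and> Y x \<le> b" and "t * b \<le> 1"
  shows "measure (PiM {..<n} (\<lambda>_. M)) {xs \<in> space (PiM {..<n} (\<lambda>_. M)). c \<le> (\<Sum>i<n. t * Y (xs i))}
    \<le> exp (real n * (t * (1 + t * b) * expectation Y) - c)"
proof -
  let ?P = "PiM {..<n} (\<lambda>_. M)"
  interpret P: prob_space ?P by (intro prob_space_PiM prob_space_axioms)
  have "emeasure ?P {xs \<in> space ?P. c \<le> (\<Sum>i<n. t * Y (xs i))}
      \<le> ennreal (exp (- c)) * (\<integral>\<^sup>+x. ennreal (exp (t * Y x)) \<partial>M) ^ n"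
    by (intro emeasure_PiM_sum_ge_Chernoff prob_space_axioms) measurable
  also have "\<dots> \<le> ennreal (exp (- c)) * ennreal (exp (t * (1 + t * b) * expectation Y)) ^ n"
    using assms by (intro mult_left_mono power_mono nn_integral_exp_le_bounded_nonneg) auto
  also have "\<dots> = ennreal (exp (real n * (t * (1 + t * b) * expectation Y) - c))"
    by (simp add: ennreal_power exp_of_nat_mult[symmetric] exp_diff exp_minus field_simps
        flip: ennreal_mult)
  finally show ?thesis by (simp add: P.emeasure_eq_measure)
qed

lemma measure_PiM_sum_upper_tail:
  assumes "Y \<in> borel_measurable M"
    and "\<And>x. x \<in> space M \<Longrightarrow> 0 \<le> Y x \<and> Y x \<le> b" and "0 < t" and "t * b \<le> 1"
  shows "measure (PiM {..<n} (\<lambda>_. M))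
      {xs \<in> space (PiM {..<n} (\<lambda>_. M)). real n * a \<le> (\<Sum>i<n. Y (xs i))}
    \<le> exp (- (real n * t * (a - (1 + t * b) * expectation Y)))"
proof -
  have "{xs \<in> space (PiM {..<n} (\<lambda>_. M)). real n * a \<le> (\<Sum>i<n. Y (xs i))}
      = {xs \<in> space (PiM {..<n} (\<lambda>_. M)). t * (real n * a) \<le> (\<Sum>i<n. t * Y (xs i))}"
    using \<open>0 < t\<close> by (simp add: sum_distrib_left[symmetric])
  then show ?thesis
    using measure_PiM_sum_tail[OF assms(1,2,4), of n "t * (real n * a)"]
    by (simp add: algebra_simps)
qed

lemma measure_PiM_sum_lower_tail:
  assumes "Y \<in> borel_measurable M"
    and Y_bounds: "\<And>x. x \<in> space M \<Longrightarrow> 0 \<le> Y x \<and> Y x \<le> b" and "0 < t"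
  shows "measure (PiM {..<n} (\<lambda>_. M))
      {xs \<in> space (PiM {..<n} (\<lambda>_. M)). (\<Sum>i<n. Y (xs i)) \<le> real n * a}
    \<le> exp (- (real n * t * ((1 - t * b) * expectation Y - a)))"
proof -
  obtain x where "x \<in> space M" using not_empty by blast
  then have "0 \<le> b" using Y_bounds by (meson order_trans)
  then have "- t * b \<le> 1" using \<open>0 < t\<close> mult_nonneg_nonneg[of t b] by linarith
  have "{xs \<in> space (PiM {..<n} (\<lambda>_. M)). (\<Sum>i<n. Y (xs i)) \<le> real n * a}
      = {xs \<in> space (PiM {..<n} (\<lambda>_. M)). - t * (real n * a) \<le> (\<Sum>i<n. - t * Y (xs i))}"
    using \<open>0 < t\<close> by (simp add: sum_negf sum_distrib_left[symmetric] mult_le_cancel_left_pos)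
  then show ?thesis
    using measure_PiM_sum_tail[OF assms(1,2) \<open>- t * b \<le> 1\<close>, of n "- t * (real n * a)"]
    by (simp add: algebra_simps)
qed

end

lemma sq_add_le_Young:
  fixes D s \<theta> :: real
  assumes "0 < \<theta>"
  shows "(D + s)\<^sup>2 \<le> (1 + \<theta>) * D\<^sup>2 + (1 + 1 / \<theta>) * s\<^sup>2"
proof -
  have "0 \<le> (\<theta> * D - s)\<^sup>2 / \<theta>" using assms by simp
  also have "(\<theta> * D - s)\<^sup>2 / \<theta> = (1 + \<theta>) * D\<^sup>2 + (1 + 1 / \<theta>) * s\<^sup>2 - (D + s)\<^sup>2"
    using assms by (simp add: field_simps power2_eq_square)
  finally show ?thesis by simp
qed

lemma sq_add_ge_Young:
  fixes D s \<theta> :: real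
  assumes "0 < \<theta>"
  shows "(1 - \<theta>) * D\<^sup>2 - s\<^sup>2 / \<theta> \<le> (D + s)\<^sup>2"
proof -
  have "0 \<le> (\<theta> * D + s)\<^sup>2 / \<theta> + s\<^sup>2" using assms by simp
  also have "(\<theta> * D + s)\<^sup>2 / \<theta> + s\<^sup>2 = (D + s)\<^sup>2 - ((1 - \<theta>) * D\<^sup>2 - s\<^sup>2 / \<theta>)"
    using assms by (simp add: field_simps power2_eq_square)
  finally show ?thesis by simp
qed

definition truncated_sq :: "real \<Rightarrow> real \<Rightarrow> real \<Rightarrow> real" where
  "truncated_sq c r x = (x - c)\<^sup>2 * indicator {x. \<bar>x - c\<bar> \<le> r} x"

lemma borel_measurable_truncated_sq [measurable]: "truncated_sq c r \<in> borel_measurable borel"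
  unfolding truncated_sq_def by measurable

lemma test_stat_eq: "test_stat n c r xs = (\<Sum>i<n. truncated_sq c r (xs i)) / real n"
  by (simp add: test_stat_def truncated_sq_def)

lemma truncated_sq_bounds: "0 \<le> truncated_sq c r x \<and> truncated_sq c r x \<le> r\<^sup>2"
  by (auto simp: truncated_sq_def abs_le_square_iff[symmetric] split: split_indicator)

lemma truncated_sq_le_sq: "truncated_sq c r x \<le> (x - c)\<^sup>2"
  by (simp add: truncated_sq_def split: split_indicator)

lemma truncated_sq_shift_le:
  assumes "0 < \<theta>" and "\<bar>c - c'\<bar> + r < R"
  shows "truncated_sq c r x + (1 + \<theta>) * ((x - c')\<^sup>2 * indicator {x. R \<le> \<bar>x - c'\<bar>} x)
    \<le> (1 + \<theta>) * (x - c')\<^sup>2 + (1 + 1 / \<theta>) * (c' - c)\<^sup>2"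
proof (cases "\<bar>x - c\<bar> \<le> r")
  case True
  then have "\<bar>x - c'\<bar> < R" using assms(2) by linarith
  moreover have "(x - c)\<^sup>2 \<le> (1 + \<theta>) * (x - c')\<^sup>2 + (1 + 1 / \<theta>) * (c' - c)\<^sup>2"
    using sq_add_le_Young[OF assms(1), of "x - c'" "c' - c"] by simp
  ultimately show ?thesis using True by (simp add: truncated_sq_def)
next
  case False
  have "0 \<le> (1 + 1 / \<theta>) * (c' - c)\<^sup>2" using assms(1) by simp
  then show ?thesis using False assms(1) by (simp add: truncated_sq_def split: split_indicator)
qed

lemma truncated_sq_shift_ge:
  assumes "0 < \<theta>" and "\<bar>c - c'\<bar> + r' \<le> r"
  shows "(1 - \<theta>) * truncated_sq c' r' x - (c' - c)\<^sup>2 / \<theta> \<le> truncated_sq c r x"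
proof (cases "\<bar>x - c'\<bar> \<le> r'")
  case True
  then have "\<bar>x - c\<bar> \<le> r" using assms(2) by linarith
  moreover have "(1 - \<theta>) * (x - c')\<^sup>2 - (c' - c)\<^sup>2 / \<theta> \<le> (x - c)\<^sup>2"
    using sq_add_ge_Young[OF assms(1), of "x - c'" "c' - c"] by simp
  ultimately show ?thesis using True by (simp add: truncated_sq_def)
next
  case False
  then have "truncated_sq c' r' x = 0" by (simp add: truncated_sq_def)
  moreover have "0 \<le> (c' - c)\<^sup>2 / \<theta>" using assms(1) by simp
  ultimately show ?thesis using truncated_sq_bounds[of c r x] by simp
qed

context real_distribution
begin

lemma integrable_truncated_sq: "integrable M (truncated_sq c r)"
  by (rule integrable_const_bound[where B = "r\<^sup>2"]) (auto simp: truncated_sq_bounds)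

lemma integrable_sq_indicator:
  assumes "integrable M (\<lambda>x. (x - \<mu>)\<^sup>2)" and "A \<in> sets borel"
  shows "integrable M (\<lambda>x. (x - \<mu>)\<^sup>2 * indicator A x)"
  using assms by (intro integrable_real_mult_indicator) auto

lemma expectation_truncated_sq_le:
  assumes "integrable M (\<lambda>x. (x - \<mu>)\<^sup>2)" and "(\<integral>x. (x - \<mu>)\<^sup>2 \<partial>M) \<le> \<sigma>\<^sup>2"
  shows "expectation (truncated_sq \<mu>0 r) \<le> 2 * \<sigma>\<^sup>2 + 2 * (\<mu> - \<mu>0)\<^sup>2"
proof -
  have "expectation (truncated_sq \<mu>0 r) \<le> (\<integral>x. 2 * (x - \<mu>)\<^sup>2 + 2 * (\<mu> - \<mu>0)\<^sup>2 \<partial>M)"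
  proof (intro integral_mono integrable_truncated_sq)
    fix x
    show "truncated_sq \<mu>0 r x \<le> 2 * (x - \<mu>)\<^sup>2 + 2 * (\<mu> - \<mu>0)\<^sup>2"
      using truncated_sq_le_sq[of \<mu>0 r x] sq_add_le_Young[of 1 "x - \<mu>" "\<mu> - \<mu>0"] by simp
  qed (use assms in simp)
  also have "\<dots> \<le> 2 * \<sigma>\<^sup>2 + 2 * (\<mu> - \<mu>0)\<^sup>2"
    using assms by (simp add: prob_space[unfolded space_eq_univ])
  finally show ?thesis .
qed

lemma expectation_truncated_sq_le_if_not_outlier_light:
  assumes "integrable M (\<lambda>x. (x - \<mu>)\<^sup>2)" and "(\<integral>x. (x - \<mu>)\<^sup>2 \<partial>M) \<le> \<sigma>\<^sup>2"
    and "\<not> outlier_light M \<mu> \<sigma> T \<beta> L" and "\<bar>\<mu>0 - \<mu>\<bar> + r < \<beta> * T" and "0 < \<theta>"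
  shows "expectation (truncated_sq \<mu>0 r) \<le> (1 + \<theta>) * ((1 - L) * \<sigma>\<^sup>2) + (1 + 1 / \<theta>) * (\<mu> - \<mu>0)\<^sup>2"
proof -
  let ?outer = "\<lambda>x. (x - \<mu>)\<^sup>2 * indicator {x. \<beta> * T \<le> \<bar>x - \<mu>\<bar>} x"
  have int_outer: "integrable M ?outer"
    using assms(1) by (rule integrable_sq_indicator) measurable
  have "expectation (truncated_sq \<mu>0 r) + (1 + \<theta>) * expectation ?outer
      = (\<integral>x. truncated_sq \<mu>0 r x + (1 + \<theta>) * ?outer x \<partial>M)"
    using int_outer integrable_truncated_sq by simp
  also have "\<dots> \<le> (\<integral>x. (1 + \<theta>) * (x - \<mu>)\<^sup>2 + (1 + 1 / \<theta>) * (\<mu> - \<mu>0)\<^sup>2 \<partial>M)"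
    using assms int_outer integrable_truncated_sq
    by (intro integral_mono truncated_sq_shift_le) auto
  also have "\<dots> = (1 + \<theta>) * (\<integral>x. (x - \<mu>)\<^sup>2 \<partial>M) + (1 + 1 / \<theta>) * (\<mu> - \<mu>0)\<^sup>2"
    using assms(1) by (simp add: prob_space[unfolded space_eq_univ])
  finally have "expectation (truncated_sq \<mu>0 r)
      \<le> (1 + \<theta>) * ((\<integral>x. (x - \<mu>)\<^sup>2 \<partial>M) - expectation ?outer) + (1 + 1 / \<theta>) * (\<mu> - \<mu>0)\<^sup>2"
    by (simp add: algebra_simps)
  moreover have "(1 + \<theta>) * ((\<integral>x. (x - \<mu>)\<^sup>2 \<partial>M) - expectation ?outer) \<le> (1 + \<theta>) * ((1 - L) * \<sigma>\<^sup>2)"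
    using assms(2,3,5) by (intro mult_left_mono) (auto simp: outlier_light_def left_diff_distrib)
  ultimately show ?thesis by linarith
qed

lemma expectation_truncated_sq_ge_if_not_inlier_light:
  assumes "\<not> inlier_light M \<mu> \<sigma> T \<beta> L" and "\<bar>\<mu>0 - \<mu>\<bar> + \<beta> * T \<le> r" and "0 < \<theta>" "\<theta> \<le> 1"
  shows "(1 - \<theta>) * ((1 - L) * \<sigma>\<^sup>2) - (\<mu> - \<mu>0)\<^sup>2 / \<theta> \<le> expectation (truncated_sq \<mu>0 r)"
proof -
  have "(1 - \<theta>) * ((1 - L) * \<sigma>\<^sup>2) \<le> (1 - \<theta>) * expectation (truncated_sq \<mu> (\<beta> * T))"
    using assms(1,4)
    by (intro mult_left_mono) (auto simp: inlier_light_def truncated_sq_def[abs_def])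
  also have "\<dots> - (\<mu> - \<mu>0)\<^sup>2 / \<theta> = (\<integral>x. (1 - \<theta>) * truncated_sq \<mu> (\<beta> * T) x - (\<mu> - \<mu>0)\<^sup>2 / \<theta> \<partial>M)"
    using integrable_truncated_sq by (simp add: prob_space[unfolded space_eq_univ])
  also have "\<dots> \<le> expectation (truncated_sq \<mu>0 r)"
    using assms(2,3) integrable_truncated_sq by (intro integral_mono truncated_sq_shift_ge) auto
  finally show ?thesis by simp
qed

lemma outlier_light_if_gt_1:
  assumes "integrable M (\<lambda>x. (x - \<mu>)\<^sup>2)" and "(\<integral>x. (x - \<mu>)\<^sup>2 \<partial>M) \<le> \<sigma>\<^sup>2"
    and "1 < L" and "0 < \<sigma>"
  shows "outlier_light M \<mu> \<sigma> T \<beta> L"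
proof -
  have "(\<integral>x. (x - \<mu>)\<^sup>2 * indicator {x. \<beta> * T \<le> \<bar>x - \<mu>\<bar>} x \<partial>M) \<le> (\<integral>x. (x - \<mu>)\<^sup>2 \<partial>M)"
    using assms(1)
    by (intro integral_mono) (auto simp: integrable_sq_indicator split: split_indicator)
  also have "\<dots> < L * \<sigma>\<^sup>2"
  proof -
    have "0 < (L - 1) * \<sigma>\<^sup>2" using assms(3,4) by simp
    then show ?thesis using assms(2) by (simp add: algebra_simps)
  qed
  finally show ?thesis by (simp add: outlier_light_def)
qed

lemma inlier_light_or_outlier_light:
  assumes "integrable M (\<lambda>x. (x - \<mu>)\<^sup>2)" and "(\<integral>x. (x - \<mu>)\<^sup>2 \<partial>M) \<le> \<sigma>\<^sup>2"
    and "\<beta> * T < \<beta>' * T" and "L < L'" and "0 < \<sigma>"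
  shows "inlier_light M \<mu> \<sigma> T \<beta> L \<or> outlier_light M \<mu> \<sigma> T \<beta>' L'"
proof (rule ccontr)
  let ?inner = "\<lambda>x. (x - \<mu>)\<^sup>2 * indicator {x. \<bar>x - \<mu>\<bar> \<le> \<beta> * T} x"
  let ?outer = "\<lambda>x. (x - \<mu>)\<^sup>2 * indicator {x. \<beta>' * T \<le> \<bar>x - \<mu>\<bar>} x"
  assume "\<not> ?thesis"
  then have "(1 - L) * \<sigma>\<^sup>2 + L' * \<sigma>\<^sup>2 \<le> expectation ?inner + expectation ?outer"
    by (simp add: inlier_light_def outlier_light_def)
  also have "\<dots> = (\<integral>x. ?inner x + ?outer x \<partial>M)"
    using assms(1) by (simp add: integrable_sq_indicator)
  also have "\<dots> \<le> (\<integral>x. (x - \<mu>)\<^sup>2 \<partial>M)"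
    using assms(1,3)
    by (intro integral_mono) (auto simp: integrable_sq_indicator split: split_indicator)
  finally have "(1 - L) * \<sigma>\<^sup>2 + L' * \<sigma>\<^sup>2 \<le> \<sigma>\<^sup>2"
    using assms(2) by linarith
  moreover have "0 < (L' - L) * \<sigma>\<^sup>2"
    using assms(4,5) by simp
  ultimately show False
    by (simp add: algebra_simps)
qed

end

(* The centre \<mu> need not be the mean of M: only the second moment about \<mu> is used. *)
locale lightness_test = real_distribution M for M :: "real measure" +
  fixes \<mu> \<sigma> \<mu>0 \<beta> L \<delta> :: real and n :: nat
  assumes beta_pos: "0 < \<beta>" and beta_less: "\<beta> < 1/16" and L_gt: "16 * \<beta> < L"
    and delta_pos: "0 < \<delta>" and delta_less_1: "\<delta> < 1" and n_pos: "0 < n" and sigma_pos: "0 < \<sigma>"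
    and integrable_sq: "integrable M (\<lambda>x. (x - \<mu>)\<^sup>2)"
    and variance_le: "(\<integral>x. (x - \<mu>)\<^sup>2 \<partial>M) \<le> \<sigma>\<^sup>2"
    and shift_le_T: "\<bar>\<mu>0 - \<mu>\<bar> \<le> \<beta> * T_param \<sigma> n \<delta>"
    and shift_sq_le: "(\<mu> - \<mu>0)\<^sup>2 \<le> \<beta>\<^sup>2 * \<sigma>\<^sup>2 / 4"
begin

abbreviation "T \<equiv> T_param \<sigma> n \<delta>"
abbreviation "Y \<equiv> truncated_sq \<mu>0 (2 * \<beta> * T)"
abbreviation "threshold \<equiv> (1 - 2 * L) * \<sigma>\<^sup>2"
definition rate :: real where "rate = L / (16 * (2 * \<beta> * T)\<^sup>2)"

lemma L_pos: "0 < L"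
  using beta_pos L_gt by linarith

lemma ln_2_div_delta_pos: "0 < ln (2 / \<delta>)"
  using delta_pos delta_less_1 by simp

lemma T_pos: "0 < T"
  using n_pos sigma_pos ln_2_div_delta_pos by (simp add: T_param_def)

lemma rate_pos: "0 < rate"
  using L_pos beta_pos T_pos by (simp add: rate_def)

lemma rate_mult_bound: "rate * (2 * \<beta> * T)\<^sup>2 = L / 16"
  using beta_pos T_pos by (simp add: rate_def)

lemma exp_neg_rate_le_delta:
  assumes "L * \<sigma>\<^sup>2 / 4 \<le> G"
  shows "exp (- (real n * rate * G)) \<le> \<delta>"
proof -
  have bound_eq: "(2 * \<beta> * T)\<^sup>2 = 2 * \<beta>\<^sup>2 * \<sigma>\<^sup>2 * real n / ln (2 / \<delta>)"
    using n_pos ln_2_div_delta_pos by (simp add: T_param_def power_mult_distrib)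
  have n_rate: "real n * rate = L * ln (2 / \<delta>) / (32 * \<beta>\<^sup>2 * \<sigma>\<^sup>2)"
    unfolding rate_def bound_eq using n_pos beta_pos sigma_pos ln_2_div_delta_pos
    by (simp add: field_simps)
  have "(16 * \<beta>)\<^sup>2 \<le> L\<^sup>2"
    using beta_pos L_gt by (intro power_mono) auto
  then have "2 * ln (2 / \<delta>) \<le> real n * rate * (L * \<sigma>\<^sup>2 / 4)"
    unfolding n_rate using beta_pos sigma_pos ln_2_div_delta_pos
    by (simp add: field_simps power2_eq_square)
  also have "\<dots> \<le> real n * rate * G"
    using assms rate_pos by (intro mult_left_mono) auto
  moreover have "- ln \<delta> \<le> 2 * ln (2 / \<delta>)"
  proof -
    have "ln (2 / \<delta>) = ln 2 - ln \<delta>" using delta_pos by (simp add: ln_div)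
    moreover have "0 < ln (2::real)" by simp
    ultimately show ?thesis using ln_less_zero[OF delta_pos delta_less_1] by linarith
  qed
  ultimately have "- (real n * rate * G) \<le> ln \<delta>"
    by linarith
  then show ?thesis
    using delta_pos by (metis exp_le_cancel_iff exp_ln)
qed

lemma shift_sq_le_sigma_sq: "(\<mu> - \<mu>0)\<^sup>2 \<le> \<sigma>\<^sup>2"
proof -
  have "\<beta>\<^sup>2 \<le> 1" using beta_pos beta_less by (intro power_le_one) auto
  then have "\<beta>\<^sup>2 * \<sigma>\<^sup>2 \<le> \<sigma>\<^sup>2" using mult_right_mono[of "\<beta>\<^sup>2" 1 "\<sigma>\<^sup>2"] by simp
  then show ?thesis using shift_sq_le zero_le_power2[of \<sigma>] by linarith
qed

lemma shift_sq_small: "(1 + 4 / L) * (\<mu> - \<mu>0)\<^sup>2 \<le> L * \<sigma>\<^sup>2 / 4"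
proof -
  have "L * \<beta> \<le> L / 16" using mult_left_mono[of \<beta> "1/16" L] L_pos beta_less by simp
  then have "L * \<beta> + 4 * \<beta> \<le> L" using L_gt L_pos by linarith
  then have "\<beta> * (L * \<beta> + 4 * \<beta>) \<le> \<beta> * L" using beta_pos by (intro mult_left_mono) auto
  also have "\<dots> \<le> L * L" using beta_pos beta_less L_gt by (intro mult_right_mono) auto
  finally have "(L + 4) * \<beta>\<^sup>2 \<le> L\<^sup>2" by (simp add: power2_eq_square algebra_simps)
  have "(1 + 4 / L) * (\<mu> - \<mu>0)\<^sup>2 \<le> (1 + 4 / L) * (\<beta>\<^sup>2 * \<sigma>\<^sup>2 / 4)"
    using shift_sq_le L_pos by (intro mult_left_mono) auto
  also have "\<dots> = (L + 4) * \<beta>\<^sup>2 * \<sigma>\<^sup>2 / (4 * L)"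
    using L_pos by (simp add: field_simps)
  also have "\<dots> \<le> L\<^sup>2 * \<sigma>\<^sup>2 / (4 * L)"
    using \<open>(L + 4) * \<beta>\<^sup>2 \<le> L\<^sup>2\<close> L_pos by (intro divide_right_mono mult_right_mono) auto
  also have "\<dots> = L * \<sigma>\<^sup>2 / 4"
    using L_pos by (simp add: power2_eq_square)
  finally show ?thesis .
qed

lemma measure_sum_ge_threshold_if_not_outlier_light:
  assumes "\<not> outlier_light M \<mu> \<sigma> T (4 * \<beta>) (4 * L)"
  shows "measure (PiM {..<n} (\<lambda>_. M))
      {xs \<in> space (PiM {..<n} (\<lambda>_. M)). real n * threshold \<le> (\<Sum>i<n. Y (xs i))} \<le> \<delta>"
proof -
  have "4 * L \<le> 1"
    using assms outlier_light_if_gt_1[OF integrable_sq variance_le _ sigma_pos] by force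
  have "\<bar>\<mu>0 - \<mu>\<bar> + 2 * \<beta> * T < 4 * \<beta> * T"
    using shift_le_T mult_pos_pos[OF beta_pos T_pos] by simp
  from expectation_truncated_sq_le_if_not_outlier_light[OF integrable_sq variance_le assms this,
      where \<theta> = "L / 4"]
  have "expectation Y \<le> (1 + L / 4) * ((1 - 4 * L) * \<sigma>\<^sup>2) + (1 + 4 / L) * (\<mu> - \<mu>0)\<^sup>2"
    using L_pos by simp
  moreover have "(1 + L / 4) * ((1 - 4 * L) * \<sigma>\<^sup>2) = \<sigma>\<^sup>2 - 15/4 * (L * \<sigma>\<^sup>2) - L * (L * \<sigma>\<^sup>2)"
    by (simp add: algebra_simps)
  moreover have "0 \<le> L * (L * \<sigma>\<^sup>2)" "0 \<le> L * \<sigma>\<^sup>2"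
    using L_pos by simp_all
  ultimately have mean_le: "expectation Y \<le> \<sigma>\<^sup>2 - 7/2 * (L * \<sigma>\<^sup>2)"
    using shift_sq_small by linarith
  then have "expectation Y \<le> \<sigma>\<^sup>2" using \<open>0 \<le> L * \<sigma>\<^sup>2\<close> by linarith
  then have "L / 16 * expectation Y \<le> L / 16 * \<sigma>\<^sup>2"
    using L_pos by (intro mult_left_mono) auto
  moreover have "threshold - (1 + L / 16) * expectation Y
      = \<sigma>\<^sup>2 - 2 * (L * \<sigma>\<^sup>2) - expectation Y - L / 16 * expectation Y"
    by (simp add: algebra_simps)
  ultimately have "L * \<sigma>\<^sup>2 / 4 \<le> threshold - (1 + rate * (2 * \<beta> * T)\<^sup>2) * expectation Y"
    using mean_le \<open>0 \<le> L * \<sigma>\<^sup>2\<close> unfolding rate_mult_bound by simp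
  then have "exp (- (real n * rate * (threshold - (1 + rate * (2 * \<beta> * T)\<^sup>2) * expectation Y))) \<le> \<delta>"
    by (rule exp_neg_rate_le_delta)
  moreover have "rate * (2 * \<beta> * T)\<^sup>2 \<le> 1"
    using rate_mult_bound \<open>4 * L \<le> 1\<close> by simp
  ultimately show ?thesis
    using measure_PiM_sum_upper_tail[OF _ truncated_sq_bounds rate_pos,
        where n = n and a = threshold]
    by (meson borel_measurable_truncated_sq measurable_finite_borel order_trans)
qed

lemma measure_sum_le_threshold_if_not_inlier_light:
  assumes "\<not> inlier_light M \<mu> \<sigma> T \<beta> L"
  shows "measure (PiM {..<n} (\<lambda>_. M))
      {xs \<in> space (PiM {..<n} (\<lambda>_. M)). (\<Sum>i<n. Y (xs i)) \<le> real n * threshold} \<le> \<delta>"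
proof (cases "threshold < 0")
  case True
  then have "real n * threshold < 0" using n_pos by (simp add: mult_pos_neg)
  moreover have "0 \<le> (\<Sum>i<n. Y (xs i))" for xs by (simp add: sum_nonneg truncated_sq_bounds)
  ultimately have "\<not> (\<Sum>i<n. Y (xs i)) \<le> real n * threshold" for xs
    by (meson le_less_trans not_le)
  then have empty: "{xs \<in> space (PiM {..<n} (\<lambda>_. M)). (\<Sum>i<n. Y (xs i)) \<le> real n * threshold} = {}"
    by blast
  show ?thesis unfolding empty using delta_pos by simp
next
  case False
  moreover have "0 < \<sigma>\<^sup>2" using sigma_pos by simp
  ultimately have "L \<le> 1/2" by (simp add: not_less zero_le_mult_iff)
  have "\<bar>\<mu>0 - \<mu>\<bar> + \<beta> * T \<le> 2 * \<beta> * T"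
    using shift_le_T by simp
  moreover have "0 < L / 4" "L / 4 \<le> 1" using L_pos \<open>L \<le> 1/2\<close> by simp_all
  ultimately have mean_ge: "(1 - L / 4) * ((1 - L) * \<sigma>\<^sup>2) - (\<mu> - \<mu>0)\<^sup>2 / (L / 4) \<le> expectation Y"
    by (rule expectation_truncated_sq_ge_if_not_inlier_light[OF assms])
  have "expectation Y \<le> 2 * \<sigma>\<^sup>2 + 2 * (\<mu> - \<mu>0)\<^sup>2"
    using integrable_sq variance_le by (rule expectation_truncated_sq_le)
  then have mean_le: "expectation Y \<le> 4 * \<sigma>\<^sup>2"
    using shift_sq_le_sigma_sq by linarith
  have "(1 + 4 / L) * (\<mu> - \<mu>0)\<^sup>2 = (\<mu> - \<mu>0)\<^sup>2 + (\<mu> - \<mu>0)\<^sup>2 / (L / 4)"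
    by (simp add: distrib_right)
  then have "(\<mu> - \<mu>0)\<^sup>2 / (L / 4) \<le> L * \<sigma>\<^sup>2 / 4"
    using shift_sq_small zero_le_power2[of "\<mu> - \<mu>0"] by linarith
  moreover have "(1 - L / 4) * ((1 - L) * \<sigma>\<^sup>2) = \<sigma>\<^sup>2 - 5/4 * (L * \<sigma>\<^sup>2) + 1/4 * (L * (L * \<sigma>\<^sup>2))"
    by (simp add: field_simps)
  moreover have "(1 - L / 16) * expectation Y - threshold
      = expectation Y - L / 16 * expectation Y - \<sigma>\<^sup>2 + 2 * (L * \<sigma>\<^sup>2)"
    by (simp add: algebra_simps)
  moreover have "L / 16 * expectation Y \<le> 1/4 * (L * \<sigma>\<^sup>2)"
    using mult_left_mono[OF mean_le, of "L / 16"] L_pos by simp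
  moreover have "0 \<le> L * (L * \<sigma>\<^sup>2)"
    using L_pos by simp
  ultimately have "L * \<sigma>\<^sup>2 / 4 \<le> (1 - rate * (2 * \<beta> * T)\<^sup>2) * expectation Y - threshold"
    using mean_ge unfolding rate_mult_bound by linarith
  then have "exp (- (real n * rate * ((1 - rate * (2 * \<beta> * T)\<^sup>2) * expectation Y - threshold))) \<le> \<delta>"
    by (rule exp_neg_rate_le_delta)
  then show ?thesis
    using measure_PiM_sum_lower_tail[OF _ truncated_sq_bounds rate_pos,
        where n = n and a = threshold]
    by (meson borel_measurable_truncated_sq measurable_finite_borel order_trans)
qed

theorem test_correct_with_high_probability:
  "measure (PiM {..<n} (\<lambda>_. M))
     {xs \<in> space (PiM {..<n} (\<lambda>_. M)).
        (test_stat n \<mu>0 (2 * \<beta> * T) xs \<le> (1 - 2 * L) * \<sigma>\<^sup>2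
           \<longrightarrow> inlier_light M \<mu> \<sigma> T \<beta> L) \<and>
        (\<not> test_stat n \<mu>0 (2 * \<beta> * T) xs \<le> (1 - 2 * L) * \<sigma>\<^sup>2
           \<longrightarrow> outlier_light M \<mu> \<sigma> T (4 * \<beta>) (4 * L))}
   \<ge> 1 - \<delta>"
  (is "measure ?P ?good \<ge> _")
proof -
  interpret P: prob_space ?P by (intro prob_space_PiM prob_space_axioms)
  let ?sum = "\<lambda>xs. \<Sum>i<n. Y (xs i)"
  have test_iff: "test_stat n \<mu>0 (2 * \<beta> * T) xs \<le> threshold \<longleftrightarrow> ?sum xs \<le> real n * threshold" for xs
    using n_pos by (simp add: test_stat_eq pos_divide_le_eq mult.commute)
  have "Y \<in> borel_measurable M" by measurable
  then have sum_measurable: "?sum \<in> borel_measurable ?P"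
    by (intro borel_measurable_sum measurable_compose[OF measurable_component_singleton]) auto
  then have sum_le_sets: "{xs \<in> space ?P. ?sum xs \<le> c} \<in> P.events"
    and sum_ge_sets: "{xs \<in> space ?P. c \<le> ?sum xs} \<in> P.events" for c
    by (simp_all add: borel_measurable_iff_le borel_measurable_iff_ge)
  have "\<beta> * T < 4 * \<beta> * T" using mult_pos_pos[OF beta_pos T_pos] by simp
  moreover have "L < 4 * L" using L_pos by simp
  ultimately have "inlier_light M \<mu> \<sigma> T \<beta> L \<or> outlier_light M \<mu> \<sigma> T (4 * \<beta>) (4 * L)"
    by (rule inlier_light_or_outlier_light[OF integrable_sq variance_le _ _ sigma_pos])
  then consider "inlier_light M \<mu> \<sigma> T \<beta> L" "outlier_light M \<mu> \<sigma> T (4 * \<beta>) (4 * L)"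
    | "\<not> outlier_light M \<mu> \<sigma> T (4 * \<beta>) (4 * L)" "inlier_light M \<mu> \<sigma> T \<beta> L"
    | "\<not> inlier_light M \<mu> \<sigma> T \<beta> L" "outlier_light M \<mu> \<sigma> T (4 * \<beta>) (4 * L)"
    by blast
  then show ?thesis
  proof cases
    case 1
    then have "?good = space ?P" by auto
    then show ?thesis using P.prob_space delta_pos by simp
  next
    case 2
    then have "?good = space ?P - {xs \<in> space ?P. \<not> ?sum xs \<le> real n * threshold}"
      by (auto simp: test_iff)
    moreover have "P.prob {xs \<in> space ?P. \<not> ?sum xs \<le> real n * threshold}
        \<le> P.prob {xs \<in> space ?P. real n * threshold \<le> ?sum xs}"
      by (intro P.finite_measure_mono sum_ge_sets) auto
    ultimately show ?thesis
      using measure_sum_ge_threshold_if_not_outlier_light[OF 2(1)]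
        P.prob_compl[of "{xs \<in> space ?P. \<not> ?sum xs \<le> real n * threshold}"]
      by (simp add: not_le_imp_less)
  next
    case 3
    then have "?good = space ?P - {xs \<in> space ?P. ?sum xs \<le> real n * threshold}"
      by (auto simp: test_iff)
    then show ?thesis
      using measure_sum_le_threshold_if_not_inlier_light[OF 3(1)] P.prob_compl[OF sum_le_sets]
      by simp
  qed
qed

end

lemma shift_bounds_if_sample_size_large:
  fixes C\<^sub>1 \<beta> \<delta> \<sigma> \<mu> \<mu>0 :: real and n :: nat
  assumes "0 < \<beta>" "\<beta> \<le> 1" "1 \<le> C\<^sub>1" "0 < \<delta>" "\<delta> < 1" "0 < \<sigma>"
    and sample_size: "4 * C\<^sub>1\<^sup>2 / \<beta>\<^sup>2 * ln (1 / \<delta>) < real n"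
    and shift: "\<bar>\<mu>0 - \<mu>\<bar> \<le> C\<^sub>1 * \<sigma> * sqrt (ln (1 / \<delta>) / real n)"
  shows "\<bar>\<mu>0 - \<mu>\<bar> \<le> \<beta> * T_param \<sigma> n \<delta>" and "(\<mu> - \<mu>0)\<^sup>2 \<le> \<beta>\<^sup>2 * \<sigma>\<^sup>2 / 4"
proof -
  define l where "l = ln (1 / \<delta>)"
  have l_pos: "0 < l" using assms(4,5) by (simp add: l_def)
  have "0 < 4 * C\<^sub>1\<^sup>2 / \<beta>\<^sup>2 * l" using assms(1,3) l_pos by simp
  then have n_pos: "0 < real n" using sample_size by (simp add: l_def)
  have key: "4 * C\<^sub>1\<^sup>2 * l < \<beta>\<^sup>2 * real n"
    using sample_size assms(1) by (simp add: l_def field_simps)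
  have "\<bar>\<mu>0 - \<mu>\<bar>\<^sup>2 \<le> (C\<^sub>1 * \<sigma> * sqrt (l / real n))\<^sup>2"
    using shift by (intro power_mono) (simp_all add: l_def)
  then have shift_sq: "(\<mu> - \<mu>0)\<^sup>2 \<le> C\<^sub>1\<^sup>2 * \<sigma>\<^sup>2 * l / real n"
    using l_pos n_pos by (simp add: power_mult_distrib power2_commute[of \<mu>0])
  also have "\<dots> \<le> \<beta>\<^sup>2 * \<sigma>\<^sup>2 / 4"
    using mult_right_mono[OF less_imp_le[OF key], of "\<sigma>\<^sup>2"] n_pos by (simp add: field_simps)
  finally show "(\<mu> - \<mu>0)\<^sup>2 \<le> \<beta>\<^sup>2 * \<sigma>\<^sup>2 / 4" .
  have "\<beta>\<^sup>2 \<le> 1" "1 \<le> C\<^sub>1\<^sup>2" using assms(1-3) by (simp_all add: power_le_one one_le_power)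
  then have "\<beta>\<^sup>2 * real n \<le> real n" and "l \<le> C\<^sub>1\<^sup>2 * l"
    using mult_right_mono[of "\<beta>\<^sup>2" 1 "real n"] mult_right_mono[of 1 "C\<^sub>1\<^sup>2" l] l_pos by simp_all
  moreover have "4 * C\<^sub>1\<^sup>2 * l = 4 * (C\<^sub>1\<^sup>2 * l)" by simp
  ultimately have "l < real n" using key l_pos by linarith
  moreover have "ln 2 < (1::real)" by (rule ln_2_less_1)
  moreover have "ln (2 / \<delta>) = ln 2 + l" using assms(4) by (simp add: l_def ln_div)
  moreover have "1 \<le> real n" using n_pos by simp
  ultimately have ln_2_div: "ln (2 / \<delta>) \<le> 2 * real n" by linarith
  have ln_2_div_pos: "0 < ln (2 / \<delta>)" using assms(4,5) by simp
  have "2 * C\<^sub>1\<^sup>2 * l * ln (2 / \<delta>) \<le> \<beta>\<^sup>2 * real n / 2 * (2 * real n)"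
    using key ln_2_div ln_2_div_pos l_pos by (intro mult_mono) auto
  have T_sq: "(T_param \<sigma> n \<delta>)\<^sup>2 = \<sigma>\<^sup>2 * real n / (2 * ln (2 / \<delta>))"
    using n_pos ln_2_div_pos by (simp add: T_param_def power_mult_distrib)
  have "C\<^sub>1\<^sup>2 * \<sigma>\<^sup>2 * l / real n = \<sigma>\<^sup>2 * (2 * C\<^sub>1\<^sup>2 * l * ln (2 / \<delta>)) / (2 * real n * ln (2 / \<delta>))"
    using n_pos ln_2_div_pos by (simp add: field_simps)
  also have "\<dots> \<le> \<sigma>\<^sup>2 * (\<beta>\<^sup>2 * real n / 2 * (2 * real n)) / (2 * real n * ln (2 / \<delta>))"
    using \<open>2 * C\<^sub>1\<^sup>2 * l * ln (2 / \<delta>) \<le> _\<close> n_pos ln_2_div_pos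
    by (intro divide_right_mono mult_left_mono) auto
  also have "\<dots> = (\<beta> * T_param \<sigma> n \<delta>)\<^sup>2"
    unfolding power_mult_distrib T_sq using n_pos ln_2_div_pos
    by (simp add: field_simps power2_eq_square)
  finally have "C\<^sub>1\<^sup>2 * \<sigma>\<^sup>2 * l / real n \<le> (\<beta> * T_param \<sigma> n \<delta>)\<^sup>2" .
  moreover have "\<bar>\<mu>0 - \<mu>\<bar>\<^sup>2 = (\<mu> - \<mu>0)\<^sup>2" by (simp add: power2_commute[of \<mu>0])
  ultimately have "\<bar>\<mu>0 - \<mu>\<bar>\<^sup>2 \<le> (\<beta> * T_param \<sigma> n \<delta>)\<^sup>2"
    using shift_sq by linarith
  moreover have "0 \<le> \<beta> * T_param \<sigma> n \<delta>"
    using assms(1,6) ln_2_div_pos by (simp add: T_param_def)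
  ultimately show "\<bar>\<mu>0 - \<mu>\<bar> \<le> \<beta> * T_param \<sigma> n \<delta>"
    by (rule power2_le_imp_le)
qed

theorem lemma13:
  fixes \<beta> L C\<^sub>1 :: real
  assumes "0 < \<beta>" "\<beta> < 1/16" "L > 16 * \<beta>" "C\<^sub>1 > 1"
  shows "\<exists>C\<^sub>2 > 1. \<forall>(\<delta>::real) (n::nat) (M::real measure) (\<mu>::real) (\<sigma>::real) (\<mu>0::real).
     0 < \<delta> \<and> \<delta> < 1 \<and> real n > C\<^sub>2 * ln (1 / \<delta>) \<and>
     prob_space M \<and> sets M = sets borel \<and>
     integrable M (\<lambda>x. x) \<and> (\<integral>x. x \<partial>M) = \<mu> \<and>
     0 < \<sigma> \<and> integrable M (\<lambda>x. (x - \<mu>)^2) \<and> (\<integral>x. (x - \<mu>)^2 \<partial>M) \<le> \<sigma>^2 \<and>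
     \<bar>\<mu>0 - \<mu>\<bar> \<le> C\<^sub>1 * \<sigma> * sqrt (ln (1 / \<delta>) / real n)
     \<longrightarrow>
     measure (PiM {..<n} (\<lambda>_. M))
       {xs \<in> space (PiM {..<n} (\<lambda>_. M)).
          (test_stat n \<mu>0 (2 * \<beta> * T_param \<sigma> n \<delta>) xs \<le> (1 - 2 * L) * \<sigma>^2
             \<longrightarrow> inlier_light M \<mu> \<sigma> (T_param \<sigma> n \<delta>) \<beta> L) \<and>
          (\<not> test_stat n \<mu>0 (2 * \<beta> * T_param \<sigma> n \<delta>) xs \<le> (1 - 2 * L) * \<sigma>^2
             \<longrightarrow> outlier_light M \<mu> \<sigma> (T_param \<sigma> n \<delta>) (4 * \<beta>) (4 * L))}
     \<ge> 1 - \<delta>"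
proof -
  define C\<^sub>2 where "C\<^sub>2 = 4 * C\<^sub>1\<^sup>2 / \<beta>\<^sup>2"
  have "\<beta>\<^sup>2 < 1" "1 < C\<^sub>1\<^sup>2" using assms by (simp_all add: power_less_one_iff)
  then have "1 < C\<^sub>2" using assms(1) by (simp add: C\<^sub>2_def field_simps)
  show ?thesis
  proof (intro exI[of _ C\<^sub>2] conjI allI impI, goal_cases)
    case 1
    show ?case by fact
  next
    case (2 \<delta> n M \<mu> \<sigma> \<mu>0)
    then have "0 < C\<^sub>2 * ln (1 / \<delta>)" using \<open>1 < C\<^sub>2\<close> by simp
    with 2 have "0 < n" by linarith
    have "\<beta> \<le> 1" "1 \<le> C\<^sub>1" using assms by simp_all
    with 2 have "\<bar>\<mu>0 - \<mu>\<bar> \<le> \<beta> * T_param \<sigma> n \<delta>" "(\<mu> - \<mu>0)\<^sup>2 \<le> \<beta>\<^sup>2 * \<sigma>\<^sup>2 / 4"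
      using shift_bounds_if_sample_size_large[OF assms(1), of C\<^sub>1 \<delta> \<sigma> n \<mu>0 \<mu>]
      unfolding C\<^sub>2_def by auto
    with 2 assms \<open>0 < n\<close> interpret lightness_test M \<mu> \<sigma> \<mu>0 \<beta> L \<delta> n
      by (simp add: lightness_test_def lightness_test_axioms_def real_distribution_def
          real_distribution_axioms_def)
    show ?case by (rule test_correct_with_high_probability)
  qed
qed

end
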